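(* Let $H$ be a real Hilbert space, $A$ a strictly positive selfadjoint operator on $H$ with $\lambda_1>0$ the minimum of its spectrum, $\alpha,\beta,\gamma,\kappa>0$ with $\mu=\gamma-\alpha\beta\ge0$, and $\eta\in\mathbb R$. Let $(u,\theta)$ be a sufficiently regular solution (e.g. with initial datum in the domain of the generator) of $$u_{ttt}+\alpha u_{tt}+\beta A u_t+\gamma A u=\eta A\theta,\qquad \theta_t+\kappa A\theta=-\eta A u_{tt}-\alpha\eta A u_t,$$ and set $\mathsf G(t)=-\langle u_t(t)-\alpha u(t),u_{tt}(t)+\alpha u_t(t)\rangle$. Then $$\frac{d}{dt}\mathsf G+\frac{\gamma}{2\alpha}\|u_t+\alpha u\|_1^2+\frac12\|u_{tt}+\alpha u_t\|^2\le \ell\|u_t\|_1^2+\eta\langle\theta,u_t+\alpha u\rangle_1-2\eta\langle\theta,u_t\rangle_1,$$ where $\ell=\frac{4\gamma^2+\mu^2}{2\alpha\gamma}+\frac{2\alpha^2}{\lambda_1}$.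
   Context: $\|u\|_\sigma=\|A^{\sigma/2}u\|$ and $\langle u,v\rangle_\sigma=\langle A^{\sigma/2}u,A^{\sigma/2}v\rangle$ for $\sigma\in\mathbb R$; $\langle\cdot,\cdot\rangle,\|\cdot\|$ are the inner product and norm of $H$. *)

theory Defs
  imports "HOL-Analysis.Analysis"
begin

text \<open>Possibly unbounded linear operators on a real Hilbert space H, given as a
  map T together with its domain D.\<close>

definition linear_op :: "'a::real_inner set \<Rightarrow> ('a \<Rightarrow> 'a) \<Rightarrow> bool" where
  "linear_op D T \<longleftrightarrow> subspace D \<and>
     (\<forall>x\<in>D. \<forall>y\<in>D. T (x + y) = T x + T y) \<and>
     (\<forall>c. \<forall>x\<in>D. T (c *\<^sub>R x) = c *\<^sub>R T x)"

text \<open>Selfadjoint: densely defined, symmetric, and the domain of the adjoint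
  is contained in (hence equal to) the domain of T.\<close>
definition selfadjoint_op :: "'a::real_inner set \<Rightarrow> ('a \<Rightarrow> 'a) \<Rightarrow> bool" where
  "selfadjoint_op D T \<longleftrightarrow> linear_op D T \<and> closure D = UNIV \<and>
     (\<forall>x\<in>D. \<forall>y\<in>D. inner (T x) y = inner x (T y)) \<and>
     (\<forall>y. (\<exists>z. \<forall>x\<in>D. inner (T x) y = inner x z) \<longrightarrow> y \<in> D)"

definition positive_op :: "'a::real_inner set \<Rightarrow> ('a \<Rightarrow> 'a) \<Rightarrow> bool" where
  "positive_op D T \<longleftrightarrow> (\<forall>x\<in>D. inner (T x) x \<ge> 0)"

definition strictly_positive_op :: "'a::real_inner set \<Rightarrow> ('a \<Rightarrow> 'a) \<Rightarrow> bool" where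
  "strictly_positive_op D T \<longleftrightarrow> (\<forall>x\<in>D. x \<noteq> 0 \<longrightarrow> inner (T x) x > 0)"

definition op_spectrum :: "'a::real_inner set \<Rightarrow> ('a \<Rightarrow> 'a) \<Rightarrow> real set" where
  "op_spectrum D T = {l. \<not> (bij_betw (\<lambda>x. T x - l *\<^sub>R x) D UNIV \<and>
       (\<exists>C. \<forall>x\<in>D. norm x \<le> C * norm (T x - l *\<^sub>R x)))}"

definition is_op_square :: "'a set \<Rightarrow> ('a \<Rightarrow> 'a) \<Rightarrow> 'a set \<Rightarrow> ('a \<Rightarrow> 'a) \<Rightarrow> bool" where
  "is_op_square DA A DB B \<longleftrightarrow> DA = {x\<in>DB. B x \<in> DB} \<and> (\<forall>x\<in>DA. A x = B (B x))"

end

theory Submission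
  imports Defs
begin

(* Differentiating G and inserting the first equation turns every term containing A into an
   inner product of square roots, <x, A y> = <A^(1/2) x, A^(1/2) y>.  The theta-terms then appear
   exactly as on the right-hand side, and the rest is handled by completing two squares: one in
   u_tt - alpha u_t, which leaves 2 alpha^2 |u_t|^2, and one in A^(1/2) u - k A^(1/2) u_t with
   k = (2 gamma - alpha beta) / (alpha gamma).  Finally lambda_1 |u_t|^2 <= |u_t|_1^2, because the
   bottom m of the numerical range of a nonnegative symmetric operator lies in its spectrum: were
   A - m boundedly invertible, the Cauchy-Schwarz inequality for the nonnegative form
   <(A - m) x, x> would push the lower bound above m. *)

definition symmetric_op :: "'a::real_inner set \<Rightarrow> ('a \<Rightarrow> 'a) \<Rightarrow> bool" where
  "symmetric_op D T \<longleftrightarrow> linear_op D T \<and> (\<forall>x\<in>D. \<forall>y\<in>D. inner (T x) y = inner x (T y))"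

lemma selfadjoint_imp_symmetric_op: "selfadjoint_op D T \<Longrightarrow> symmetric_op D T"
  by (simp add: selfadjoint_op_def symmetric_op_def)

lemma strictly_positive_imp_positive_op: "strictly_positive_op D T \<Longrightarrow> positive_op D T"
  unfolding strictly_positive_op_def positive_op_def
  by (metis inner_zero_right order.strict_implies_order order_refl)

lemma linear_op_add_scaleR:
  assumes "linear_op D T" "x \<in> D" "y \<in> D"
  shows "T (x + c *\<^sub>R y) = T x + c *\<^sub>R T y"
  using assms unfolding linear_op_def by (simp add: subspace_scale)

lemma linear_op_diff_scaleR:
  assumes "linear_op D T" "x \<in> D" "y \<in> D"
  shows "T (x - c *\<^sub>R y) = T x - c *\<^sub>R T y"
  using linear_op_add_scaleR[OF assms, of "- c"] by simp

lemma is_op_square_inner: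
  assumes "is_op_square DA A DB B" "symmetric_op DB B" "x \<in> DB" "y \<in> DA"
  shows "inner x (A y) = inner (B x) (B y)"
  using assms unfolding is_op_square_def symmetric_op_def by auto

lemma quadratic_nonneg_imp_discriminant_le:
  fixes a b c :: real
  assumes nonneg: "\<forall>s. 0 \<le> a - 2 * s * b + s\<^sup>2 * c"
  shows "b\<^sup>2 \<le> a * c"
proof (cases "c > 0")
  case True
  have "0 \<le> a - 2 * (b / c) * b + (b / c)\<^sup>2 * c" using nonneg by blast
  also have "\<dots> = (a * c - b\<^sup>2) / c" using True by (simp add: field_simps power2_eq_square)
  finally show ?thesis using True by (simp add: zero_le_divide_iff)
next
  case False
  have "b = 0"
  proof (rule ccontr)
    assume "b \<noteq> 0"
    have "0 \<le> a - 2 * ((a + 1) / (2 * b)) * b + ((a + 1) / (2 * b))\<^sup>2 * c" using nonneg by blast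
    moreover have "((a + 1) / (2 * b))\<^sup>2 * c \<le> 0" using False by (simp add: mult_nonneg_nonpos)
    moreover have "a - 2 * ((a + 1) / (2 * b)) * b = - 1" using \<open>b \<noteq> 0\<close> by (simp add: field_simps)
    ultimately show False by linarith
  qed
  show ?thesis
  proof (cases "c = 0")
    case False
    then have "c < 0" using \<open>\<not> c > 0\<close> by simp
    define s where "s = a / (- c) + 1"
    have "0 \<le> a" using nonneg[rule_format, of 0] by simp
    then have "1 \<le> s" using \<open>c < 0\<close> by (simp add: s_def divide_nonneg_neg)
    then have "s \<le> s\<^sup>2" by (simp add: power2_eq_square)
    have "0 \<le> a + s\<^sup>2 * c" using nonneg \<open>b = 0\<close> by simp
    moreover have "s\<^sup>2 * c \<le> s * c" using \<open>s \<le> s\<^sup>2\<close> \<open>c < 0\<close> by (simp add: mult_right_mono_neg)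
    moreover have "a + s * c = c" using \<open>c < 0\<close> by (simp add: s_def field_simps)
    ultimately show ?thesis using \<open>c < 0\<close> by simp
  qed (simp add: \<open>b = 0\<close>)
qed

lemma symmetric_op_shifted_Cauchy_Schwarz:
  assumes A: "symmetric_op D A" and lower: "\<forall>x\<in>D. m * (norm x)\<^sup>2 \<le> inner (A x) x"
    and y: "y \<in> D" and z: "z \<in> D"
  shows "(inner (A y - m *\<^sub>R y) z)\<^sup>2
    \<le> (inner (A y) y - m * (norm y)\<^sup>2) * (inner (A z) z - m * (norm z)\<^sup>2)"
proof (rule quadratic_nonneg_imp_discriminant_le, intro allI)
  fix s :: real
  have lin: "linear_op D A" and "inner (A z) y = inner z (A y)"
    using A y z unfolding symmetric_op_def by auto
  then have sym: "inner y (A z) = inner z (A y)"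
    by (simp only: inner_commute)
  have "y - s *\<^sub>R z \<in> D"
    using lin y z unfolding linear_op_def by (simp add: subspace_diff subspace_scale)
  then have "0 \<le> inner (A (y - s *\<^sub>R z)) (y - s *\<^sub>R z) - m * (norm (y - s *\<^sub>R z))\<^sup>2"
    using lower by simp
  also have "\<dots> = (inner (A y) y - m * (norm y)\<^sup>2) - 2 * s * inner (A y - m *\<^sub>R y) z
      + s\<^sup>2 * (inner (A z) z - m * (norm z)\<^sup>2)"
    unfolding linear_op_diff_scaleR[OF lin y z] power2_norm_eq_inner
    by (simp add: inner_diff_left inner_diff_right sym inner_commute power2_eq_square algebra_simps)
  finally show "0 \<le> (inner (A y) y - m * (norm y)\<^sup>2) - 2 * s * inner (A y - m *\<^sub>R y) z
      + s\<^sup>2 * (inner (A z) z - m * (norm z)\<^sup>2)" .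
qed

lemma norm_sq_le_shifted_form:
  assumes A: "symmetric_op D A" and lower: "\<forall>x\<in>D. m * (norm x)\<^sup>2 \<le> inner (A x) x"
    and x: "x \<in> D" and y: "y \<in> D" and x_eq: "x = A y - m *\<^sub>R y" and C: "norm y \<le> C * norm x"
  shows "(norm x)\<^sup>2 \<le> C * (inner (A x) x - m * (norm x)\<^sup>2)"
proof -
  define Q where "Q z = inner (A z) z - m * (norm z)\<^sup>2" for z
  have Qx: "0 \<le> Q x" using lower x by (simp add: Q_def)
  have "inner (A x) y = inner x (A y)" using A x y unfolding symmetric_op_def by auto
  then have norm_x: "(norm x)\<^sup>2 = inner (A x - m *\<^sub>R x) y"
    unfolding power2_norm_eq_inner by (subst (2) x_eq) (simp add: inner_diff_left inner_diff_right)
  have "Q y = inner x y"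
    unfolding Q_def x_eq by (simp add: inner_diff_left power2_norm_eq_inner)
  also have "\<dots> \<le> norm x * norm y" by (rule norm_cauchy_schwarz)
  also have "\<dots> \<le> norm x * (C * norm x)" using C by (simp add: mult_left_mono)
  finally have Qy: "Q y \<le> C * (norm x)\<^sup>2" by (simp add: power2_eq_square ac_simps)
  have "((norm x)\<^sup>2)\<^sup>2 \<le> Q x * Q y"
    using symmetric_op_shifted_Cauchy_Schwarz[OF A lower x y, folded norm_x] unfolding Q_def .
  also have "\<dots> \<le> Q x * (C * (norm x)\<^sup>2)" using Qy Qx by (rule mult_left_mono)
  finally have sq: "(norm x)\<^sup>2 * (norm x)\<^sup>2 \<le> (C * Q x) * (norm x)\<^sup>2"
    by (simp add: power2_eq_square ac_simps)
  show ?thesis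
  proof (cases "x = 0")
    case False
    then show ?thesis using mult_right_le_imp_le[OF sq] by (simp add: Q_def)
  qed simp
qed

lemma not_in_op_spectrum_raises_lower_bound:
  assumes A: "symmetric_op D A" and lower: "\<forall>x\<in>D. m * (norm x)\<^sup>2 \<le> inner (A x) x"
    and m: "m \<notin> op_spectrum D A"
  obtains \<delta> where "\<delta> > 0" "\<forall>x\<in>D. (m + \<delta>) * (norm x)\<^sup>2 \<le> inner (A x) x"
proof -
  obtain C where bij: "bij_betw (\<lambda>x. A x - m *\<^sub>R x) D UNIV"
    and C: "\<forall>x\<in>D. norm x \<le> C * norm (A x - m *\<^sub>R x)"
    using m unfolding op_spectrum_def by blast
  have "(m + 1 / (\<bar>C\<bar> + 1)) * (norm x)\<^sup>2 \<le> inner (A x) x" if x: "x \<in> D" for x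
  proof -
    have "x \<in> (\<lambda>x. A x - m *\<^sub>R x) ` D" using bij_betw_imp_surj_on[OF bij] by simp
    then obtain y where y: "y \<in> D" and x_eq: "x = A y - m *\<^sub>R y" by blast
    have Qx: "0 \<le> inner (A x) x - m * (norm x)\<^sup>2" using lower x by simp
    have "(norm x)\<^sup>2 \<le> C * (inner (A x) x - m * (norm x)\<^sup>2)"
      using C y x_eq by (intro norm_sq_le_shifted_form[OF A lower x y x_eq]) simp
    also have "\<dots> \<le> (\<bar>C\<bar> + 1) * (inner (A x) x - m * (norm x)\<^sup>2)"
      using Qx by (simp add: mult_right_mono)
    finally have "(norm x)\<^sup>2 / (\<bar>C\<bar> + 1) \<le> inner (A x) x - m * (norm x)\<^sup>2"
      by (simp add: pos_divide_le_eq ac_simps)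
    then show ?thesis by (simp add: algebra_simps)
  qed
  then show thesis by (intro that[of "1 / (\<bar>C\<bar> + 1)"]) simp_all
qed

lemma op_spectrum_lower_bound:
  assumes A: "symmetric_op D A" and pos: "positive_op D A"
    and lam: "\<forall>l\<in>op_spectrum D A. lam \<le> l" and x: "x \<in> D"
  shows "lam * (norm x)\<^sup>2 \<le> inner (A x) x"
proof (cases "x = 0")
  case False
  define R where "R = {inner (A y) y / (norm y)\<^sup>2 | y. y \<in> D \<and> y \<noteq> 0}"
  define m where "m = Inf R"
  have R_ne: "R \<noteq> {}" using x False by (auto simp: R_def)
  have R_bdd: "bdd_below R"
    using pos by (auto simp: R_def positive_op_def intro!: bdd_belowI[of _ 0])
  have m_lower: "\<forall>y\<in>D. m * (norm y)\<^sup>2 \<le> inner (A y) y"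
  proof
    fix y assume "y \<in> D"
    show "m * (norm y)\<^sup>2 \<le> inner (A y) y"
    proof (cases "y = 0")
      case False
      have "m \<le> inner (A y) y / (norm y)\<^sup>2"
        unfolding m_def using \<open>y \<in> D\<close> False by (intro cInf_lower[OF _ R_bdd]) (auto simp: R_def)
      then show ?thesis using False by (simp add: pos_le_divide_eq)
    qed simp
  qed
  have "lam \<le> m"
  proof (rule ccontr)
    assume "\<not> lam \<le> m"
    then have "m \<notin> op_spectrum D A" using lam by force
    then obtain \<delta> where "\<delta> > 0" and raised: "\<forall>y\<in>D. (m + \<delta>) * (norm y)\<^sup>2 \<le> inner (A y) y"
      by (rule not_in_op_spectrum_raises_lower_bound[OF A m_lower])
    have "m + \<delta> \<le> Inf R"
      using raised by (intro cInf_greatest[OF R_ne]) (auto simp: R_def pos_le_divide_eq)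
    then show False using \<open>\<delta> > 0\<close> by (simp add: m_def)
  qed
  then show ?thesis using m_lower x by (meson mult_right_mono order_trans zero_le_power2)
qed simp

lemma is_op_square_spectral_bound:
  assumes A: "symmetric_op DA A" "positive_op DA A" and lam: "\<forall>l\<in>op_spectrum DA A. lam \<le> l"
    and B: "symmetric_op DB B" "is_op_square DA A DB B" and x: "x \<in> DA"
  shows "lam * (norm x)\<^sup>2 \<le> (norm (B x))\<^sup>2"
proof -
  have "x \<in> DB" using x B(2) by (simp add: is_op_square_def)
  have "lam * (norm x)\<^sup>2 \<le> inner (A x) x" by (rule op_spectrum_lower_bound[OF A lam x])
  also have "\<dots> = (norm (B x))\<^sup>2"
    using is_op_square_inner[OF B(2,1) \<open>x \<in> DB\<close> x] by (simp add: inner_commute power2_norm_eq_inner)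
  finally show ?thesis .
qed

lemma half_norm_add_minus_inner_le:
  fixes a b :: "'a::real_inner"
  shows "(norm (a + b))\<^sup>2 / 2 - inner (a - b) (a + b) \<le> 2 * (norm b)\<^sup>2"
proof -
  have "(norm (a + b))\<^sup>2 / 2 - inner (a - b) (a + b) = 2 * (norm b)\<^sup>2 - (norm (a - b))\<^sup>2 / 2"
    by (simp add: power2_norm_eq_inner inner_add_left inner_add_right inner_diff_left
        inner_diff_right inner_commute field_simps)
  then show ?thesis by simp
qed

lemma completed_square_bound:
  fixes p q :: "'a::real_inner" and \<alpha> \<beta> \<gamma> :: real
  assumes "\<alpha> > 0" "\<gamma> > 0"
  shows "\<gamma> / (2 * \<alpha>) * (norm (p + \<alpha> *\<^sub>R q))\<^sup>2 + inner (p - \<alpha> *\<^sub>R q) (\<beta> *\<^sub>R p + \<gamma> *\<^sub>R q)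
    \<le> (4 * \<gamma>\<^sup>2 + (\<gamma> - \<alpha> * \<beta>)\<^sup>2) / (2 * \<alpha> * \<gamma>) * (norm p)\<^sup>2"
proof -
  define k where "k = (2 * \<gamma> - \<alpha> * \<beta>) / (\<alpha> * \<gamma>)"
  have "\<gamma> / (2 * \<alpha>) * (norm (p + \<alpha> *\<^sub>R q))\<^sup>2 + inner (p - \<alpha> *\<^sub>R q) (\<beta> *\<^sub>R p + \<gamma> *\<^sub>R q)
      = (4 * \<gamma>\<^sup>2 + (\<gamma> - \<alpha> * \<beta>)\<^sup>2) / (2 * \<alpha> * \<gamma>) * (norm p)\<^sup>2
        - \<alpha> * \<gamma> / 2 * (norm (q - k *\<^sub>R p))\<^sup>2"
    using assms unfolding k_def power2_norm_eq_inner
    by (simp add: inner_add_left inner_add_right inner_diff_left inner_diff_right inner_commute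
        field_simps power2_eq_square)
  moreover have "0 \<le> \<alpha> * \<gamma> / 2 * (norm (q - k *\<^sub>R p))\<^sup>2" using assms by simp
  ultimately show ?thesis by linarith
qed

lemma G_has_derivative:
  fixes u u1 u2 u3 :: "real \<Rightarrow> 'a::real_inner"
  assumes "(u has_vector_derivative u1 t) (at t within S)"
    and "(u1 has_vector_derivative u2 t) (at t within S)"
    and "(u2 has_vector_derivative u3 t) (at t within S)"
  shows "((\<lambda>s. - inner (u1 s - \<alpha> *\<^sub>R u s) (u2 s + \<alpha> *\<^sub>R u1 s)) has_real_derivative
      - (inner (u2 t - \<alpha> *\<^sub>R u1 t) (u2 t + \<alpha> *\<^sub>R u1 t) + inner (u1 t - \<alpha> *\<^sub>R u t) (u3 t + \<alpha> *\<^sub>R u2 t)))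
    (at t within S)"
proof -
  have "((\<lambda>s. u1 s - \<alpha> *\<^sub>R u s) has_vector_derivative u2 t - \<alpha> *\<^sub>R u1 t) (at t within S)"
   and "((\<lambda>s. u2 s + \<alpha> *\<^sub>R u1 s) has_vector_derivative u3 t + \<alpha> *\<^sub>R u2 t) (at t within S)"
    using assms by (auto intro!: derivative_eq_intros)
  from bounded_bilinear.has_vector_derivative[OF bounded_bilinear_inner this]
  show ?thesis
    unfolding has_real_derivative_iff_has_vector_derivative
    by (auto dest: has_vector_derivative_minus simp: add.commute)
qed

lemma G_derivative_bound:
  fixes A B :: "'a::real_inner \<Rightarrow> 'a"
  assumes A: "symmetric_op DA A" "positive_op DA A"
    and lam1: "\<forall>l\<in>op_spectrum DA A. lam1 \<le> l" "lam1 > 0"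
    and B: "symmetric_op DB B" "is_op_square DA A DB B"
    and params: "\<alpha> > 0" "\<gamma> > 0"
    and dom: "x \<in> DA" "x1 \<in> DA" "z \<in> DA"
    and eq: "x3 + \<alpha> *\<^sub>R x2 + \<beta> *\<^sub>R A x1 + \<gamma> *\<^sub>R A x = \<eta> *\<^sub>R A z"
  shows "- (inner (x2 - \<alpha> *\<^sub>R x1) (x2 + \<alpha> *\<^sub>R x1) + inner (x1 - \<alpha> *\<^sub>R x) (x3 + \<alpha> *\<^sub>R x2))
      + \<gamma> / (2 * \<alpha>) * (norm (B (x1 + \<alpha> *\<^sub>R x)))\<^sup>2 + 1 / 2 * (norm (x2 + \<alpha> *\<^sub>R x1))\<^sup>2
    \<le> ((4 * \<gamma>\<^sup>2 + (\<gamma> - \<alpha> * \<beta>)\<^sup>2) / (2 * \<alpha> * \<gamma>) + 2 * \<alpha>\<^sup>2 / lam1) * (norm (B x1))\<^sup>2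
      + \<eta> * inner (B z) (B (x1 + \<alpha> *\<^sub>R x)) - 2 * \<eta> * inner (B z) (B x1)"
proof -
  have lin_B: "linear_op DB B" using B(1) by (simp add: symmetric_op_def)
  have in_DB: "x \<in> DB" "x1 \<in> DB" using dom B(2) by (auto simp: is_op_square_def)
  define v where "v = x1 - \<alpha> *\<^sub>R x"
  define w where "w = x2 + \<alpha> *\<^sub>R x1"
  define p where "p = B x1"
  define q where "q = B x"
  define r where "r = B z"
  have "v \<in> DB"
    using lin_B in_DB unfolding v_def linear_op_def by (simp add: subspace_diff subspace_scale)
  have Bv: "B v = p - \<alpha> *\<^sub>R q"
    unfolding v_def p_def q_def by (rule linear_op_diff_scaleR[OF lin_B in_DB(2,1)])
  have "x3 + \<alpha> *\<^sub>R x2 = \<eta> *\<^sub>R A z - \<beta> *\<^sub>R A x1 - \<gamma> *\<^sub>R A x"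
    using eq by (simp add: algebra_simps)
  then have v_eq: "inner v (x3 + \<alpha> *\<^sub>R x2)
      = \<eta> * inner (p - \<alpha> *\<^sub>R q) r - inner (p - \<alpha> *\<^sub>R q) (\<beta> *\<^sub>R p + \<gamma> *\<^sub>R q)"
    using is_op_square_inner[OF B(2,1) \<open>v \<in> DB\<close>] dom
    by (simp add: inner_diff_right inner_add_right p_def q_def r_def Bv)
  have "(norm x1)\<^sup>2 \<le> (norm p)\<^sup>2 / lam1"
    using is_op_square_spectral_bound[OF A lam1(1) B dom(2)] lam1(2)
    by (simp add: p_def pos_le_divide_eq ac_simps)
  then have x1_bound: "2 * (norm (\<alpha> *\<^sub>R x1))\<^sup>2 \<le> 2 * \<alpha>\<^sup>2 * ((norm p)\<^sup>2 / lam1)"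
    unfolding norm_scaleR power_mult_distrib power2_abs mult.assoc
    by (intro mult_left_mono) simp_all
  have "(norm w)\<^sup>2 / 2 - inner (x2 - \<alpha> *\<^sub>R x1) w \<le> 2 * (norm (\<alpha> *\<^sub>R x1))\<^sup>2"
    unfolding w_def by (rule half_norm_add_minus_inner_le)
  moreover have "\<gamma> / (2 * \<alpha>) * (norm (p + \<alpha> *\<^sub>R q))\<^sup>2 + inner (p - \<alpha> *\<^sub>R q) (\<beta> *\<^sub>R p + \<gamma> *\<^sub>R q)
      \<le> (4 * \<gamma>\<^sup>2 + (\<gamma> - \<alpha> * \<beta>)\<^sup>2) / (2 * \<alpha> * \<gamma>) * (norm p)\<^sup>2"
    using params by (rule completed_square_bound)
  ultimately have "- (inner (x2 - \<alpha> *\<^sub>R x1) w + inner v (x3 + \<alpha> *\<^sub>R x2))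
      + \<gamma> / (2 * \<alpha>) * (norm (p + \<alpha> *\<^sub>R q))\<^sup>2 + 1 / 2 * (norm w)\<^sup>2
    \<le> 2 * \<alpha>\<^sup>2 * ((norm p)\<^sup>2 / lam1) + (4 * \<gamma>\<^sup>2 + (\<gamma> - \<alpha> * \<beta>)\<^sup>2) / (2 * \<alpha> * \<gamma>) * (norm p)\<^sup>2
      - \<eta> * inner (p - \<alpha> *\<^sub>R q) r"
    using x1_bound v_eq by linarith
  also have "\<dots> = ((4 * \<gamma>\<^sup>2 + (\<gamma> - \<alpha> * \<beta>)\<^sup>2) / (2 * \<alpha> * \<gamma>) + 2 * \<alpha>\<^sup>2 / lam1) * (norm p)\<^sup>2
      + \<eta> * inner r (p + \<alpha> *\<^sub>R q) - 2 * \<eta> * inner r p"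
    by (simp add: inner_diff_left inner_add_right inner_commute algebra_simps)
  finally show ?thesis
    unfolding v_def w_def p_def q_def r_def linear_op_add_scaleR[OF lin_B in_DB(2,1)] .
qed

theorem lemma7p3:
  fixes DA :: "'a::{real_inner, complete_space} set" and A :: "'a \<Rightarrow> 'a"
    and DB :: "'a set" and B :: "'a \<Rightarrow> 'a"
    and \<alpha> \<beta> \<gamma> \<kappa> \<eta> lam1 :: real
    and u u1 u2 u3 \<theta> \<theta>1 :: "real \<Rightarrow> 'a"
  assumes A_sa: "selfadjoint_op DA A" and A_pos: "strictly_positive_op DA A"
    and lam1_min: "lam1 \<in> op_spectrum DA A" "\<forall>l\<in>op_spectrum DA A. lam1 \<le> l" and lam1_pos: "lam1 > 0"
    and B_sqrt: "selfadjoint_op DB B" "positive_op DB B" "is_op_square DA A DB B"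
    and params: "\<alpha> > 0" "\<beta> > 0" "\<gamma> > 0" "\<kappa> > 0" "\<gamma> - \<alpha> * \<beta> \<ge> 0"
    and du: "\<forall>t\<ge>0. (u has_vector_derivative u1 t) (at t within {0..})"
    and du1: "\<forall>t\<ge>0. (u1 has_vector_derivative u2 t) (at t within {0..})"
    and du2: "\<forall>t\<ge>0. (u2 has_vector_derivative u3 t) (at t within {0..})"
    and d\<theta>: "\<forall>t\<ge>0. (\<theta> has_vector_derivative \<theta>1 t) (at t within {0..})"
    and dom: "\<forall>t\<ge>0. u t \<in> DA \<and> u1 t \<in> DA \<and> u2 t \<in> DA \<and> \<theta> t \<in> DA"
    and eq1: "\<forall>t\<ge>0. u3 t + \<alpha> *\<^sub>R u2 t + \<beta> *\<^sub>R A (u1 t) + \<gamma> *\<^sub>R A (u t) = \<eta> *\<^sub>R A (\<theta> t)"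
    and eq2: "\<forall>t\<ge>0. \<theta>1 t + \<kappa> *\<^sub>R A (\<theta> t) = - (\<eta> *\<^sub>R A (u2 t)) - (\<alpha> * \<eta>) *\<^sub>R A (u1 t)"
  shows "\<forall>t\<ge>0. \<exists>G'.
     ((\<lambda>s. - inner (u1 s - \<alpha> *\<^sub>R u s) (u2 s + \<alpha> *\<^sub>R u1 s)) has_real_derivative G') (at t within {0..}) \<and>
     G' + \<gamma> / (2 * \<alpha>) * (norm (B (u1 t + \<alpha> *\<^sub>R u t)))\<^sup>2 + 1 / 2 * (norm (u2 t + \<alpha> *\<^sub>R u1 t))\<^sup>2
       \<le> ((4 * \<gamma>\<^sup>2 + (\<gamma> - \<alpha> * \<beta>)\<^sup>2) / (2 * \<alpha> * \<gamma>) + 2 * \<alpha>\<^sup>2 / lam1) * (norm (B (u1 t)))\<^sup>2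
         + \<eta> * inner (B (\<theta> t)) (B (u1 t + \<alpha> *\<^sub>R u t)) - 2 * \<eta> * inner (B (\<theta> t)) (B (u1 t))"
proof -
  have A: "symmetric_op DA A" "positive_op DA A"
    using A_sa A_pos by (simp_all add: selfadjoint_imp_symmetric_op strictly_positive_imp_positive_op)
  have B: "symmetric_op DB B" using B_sqrt(1) by (rule selfadjoint_imp_symmetric_op)
  show ?thesis
    by (intro allI impI exI conjI;
        rule G_has_derivative G_derivative_bound[OF A lam1_min(2) lam1_pos B B_sqrt(3) params(1,3)])
      (use du du1 du2 dom eq1 in auto)
qed

end
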